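(* Let $\Omega\subset\mathbb R^2$ be a bounded domain and let $u\in C^{2,1}(\bar\Omega\times[0,\infty))$ satisfy $E_2[u]:=-u_t\,\Delta u+\det u_{xx}>0$ on $\bar\Omega\times[0,\infty)$. Let $\mathbf u\in C^2(\bar\Omega)$ be strictly convex on $\bar\Omega$ (i.e. $\mathbf u_{xx}(x)$ is positive definite for every $x\in\bar\Omega$). Assume that there is a point $x_0\in\Omega$ with $\Delta u(x_0,0)>0$, that $\sup_{x\in\partial\Omega}|u(x,t)-\mathbf u(x)|\to0$ as $t\to\infty$, and that $\sup_{x\in\bar\Omega}|E_2[u](x,t)-\det\mathbf u_{xx}(x)|\to0$ as $t\to\infty$. Then $\sup_{x\in\bar\Omega}|u(x,t)-\mathbf u(x)|\to0$ as $t\to\infty$.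
   Context: $u_{xx}$ denotes the Hessian matrix of $u$ in the space variables $x=(x_1,x_2)$, and $u_t$ the time derivative. $C^{2,1}$ means twice continuously differentiable in $x$ and once continuously differentiable in $t$. The limits in the hypotheses and conclusion are understood uniformly in $x$. *)

theory Defs
  imports "HOL-Analysis.Analysis"
begin

definition lap2 :: "real^2^2 \<Rightarrow> real" where
  "lap2 H = H $ 1 $ 1 + H $ 2 $ 2"

definition pos_def2 :: "real^2^2 \<Rightarrow> bool" where
  "pos_def2 H \<longleftrightarrow> (\<forall>h::real^2. h \<noteq> 0 \<longrightarrow> h \<bullet> (H *v h) > 0)"

text \<open>u is C^{2,1} on closure(Omega) x [0,inf) with spatial gradient Du, spatial Hessian Hu
 and time derivative Ut: the derivatives exist at x in Omega, t >= 0 (one-sided in t at t = 0)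
 and u, Du, Hu, Ut extend continuously (jointly in (x,t)) to closure(Omega) x [0,inf).\<close>

definition C21_with :: "(real^2) set \<Rightarrow> (real^2 \<Rightarrow> real \<Rightarrow> real) \<Rightarrow> (real^2 \<Rightarrow> real \<Rightarrow> real^2)
    \<Rightarrow> (real^2 \<Rightarrow> real \<Rightarrow> real^2^2) \<Rightarrow> (real^2 \<Rightarrow> real \<Rightarrow> real) \<Rightarrow> bool" where
  "C21_with \<Omega> u Du Hu Ut \<longleftrightarrow>
     (\<forall>x\<in>\<Omega>. \<forall>t\<ge>0.
        ((\<lambda>y. u y t) has_derivative (\<lambda>h. Du x t \<bullet> h)) (at x) \<and>
        ((\<lambda>y. Du y t) has_derivative (\<lambda>h. Hu x t *v h)) (at x) \<and>
        ((\<lambda>s. u x s) has_real_derivative Ut x t) (at t within {0..})) \<and>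
     continuous_on (closure \<Omega> \<times> {0..}) (\<lambda>(x,t). u x t) \<and>
     continuous_on (closure \<Omega> \<times> {0..}) (\<lambda>(x,t). Du x t) \<and>
     continuous_on (closure \<Omega> \<times> {0..}) (\<lambda>(x,t). Hu x t) \<and>
     continuous_on (closure \<Omega> \<times> {0..}) (\<lambda>(x,t). Ut x t)"

definition C2_with :: "(real^2) set \<Rightarrow> (real^2 \<Rightarrow> real) \<Rightarrow> (real^2 \<Rightarrow> real^2)
    \<Rightarrow> (real^2 \<Rightarrow> real^2^2) \<Rightarrow> bool" where
  "C2_with \<Omega> v Dv Hv \<longleftrightarrow>
     (\<forall>x\<in>\<Omega>. (v has_derivative (\<lambda>h. Dv x \<bullet> h)) (at x) \<and>
              (Dv has_derivative (\<lambda>h. Hv x *v h)) (at x)) \<and>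
     continuous_on (closure \<Omega>) v \<and> continuous_on (closure \<Omega>) Dv \<and>
     continuous_on (closure \<Omega>) Hv"

definition E2 :: "real \<Rightarrow> real^2^2 \<Rightarrow> real" where
  "E2 ut H = - ut * lap2 H + det H"

end

theory Submission
  imports Defs "HOL-Real_Asymp.Real_Asymp"
begin

text \<open>
  Consider \<open>w = u - v\<close> (and symmetrically \<open>v - u\<close>). For large \<open>t\<close>, \<open>E\<^sub>2[u]\<close> is close to
  \<open>det v\<^sub>x\<^sub>x\<close>, so wherever the Hessian of \<open>w\<close> lies below \<open>-2\<delta> I\<close> the equation forces
  \<open>w\<^sub>t < -c\<close>. This uses that the mixed discriminant of two positive semidefinite \<open>2\<times>2\<close>
  matrices is nonnegative and, for the upper bound, that \<open>\<Delta>u > 0\<close> throughout: for a symmetric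
  Hessian \<open>E\<^sub>2[u] > 0\<close> forbids \<open>\<Delta>u = 0\<close>, and \<open>\<Omega> \<times> [0,\<infinity>)\<close> is connected. The parabolic
  maximum principle applied to \<open>w - \<delta> (\<rho> - |x|\<^sup>2) - M exp (-(c/M)(t - T))\<close> then bounds \<open>w\<close>
  by \<open>e/3 + \<delta> \<rho> + M exp (-(c/M)(t - T))\<close>, whose last term dies out.
\<close>

lemma mixed_discriminant_nonneg:
  fixes p q r d1 d2 e :: real
  assumes "0 \<le> p" "0 \<le> r" "q\<^sup>2 \<le> p * r" "0 \<le> d1" "0 \<le> d2" "e\<^sup>2 \<le> d1 * d2"
  shows "2 * q * e \<le> p * d2 + r * d1"
proof -
  have "(2 * q * e)\<^sup>2 = 4 * q\<^sup>2 * e\<^sup>2" by (simp add: power2_eq_square)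
  also have "\<dots> \<le> 4 * (p * r) * (d1 * d2)"
    using assms by (intro mult_left_mono mult_mono) auto
  also have "\<dots> \<le> (p * d2 + r * d1)\<^sup>2"
    using zero_le_power2[of "p * d2 - r * d1"] by (simp add: power2_eq_square algebra_simps)
  finally have "\<bar>2 * q * e\<bar> \<le> \<bar>p * d2 + r * d1\<bar>" by (simp only: abs_le_square_iff)
  moreover have "0 \<le> p * d2 + r * d1" using assms by simp
  ultimately show ?thesis by linarith
qed

lemma quadratic_form_nonneg_coeffs:
  fixes d1 d2 e :: real
  assumes "\<forall>a b. 0 \<le> d1 * a\<^sup>2 + 2 * e * a * b + d2 * b\<^sup>2"
  shows "0 \<le> d1" "0 \<le> d2" "e\<^sup>2 \<le> d1 * d2"
proof -
  show d1: "0 \<le> d1" using assms[rule_format, of 1 0] by simp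
  show d2: "0 \<le> d2" using assms[rule_format, of 0 1] by simp
  have A: "0 \<le> d1 * (d1 * d2 - e\<^sup>2)"
    using assms[rule_format, of e "-d1"] by (simp add: power2_eq_square algebra_simps)
  have B: "0 \<le> d2 * (d1 * d2 - e\<^sup>2)"
    using assms[rule_format, of d2 "-e"] by (simp add: power2_eq_square algebra_simps)
  show "e\<^sup>2 \<le> d1 * d2"
  proof (cases "d1 > 0 \<or> d2 > 0")
    case True
    then show ?thesis using A B by (auto simp: zero_le_mult_iff)
  next
    case False
    then have "d1 = 0" "d2 = 0" using d1 d2 by auto
    then have "0 \<le> 2 * e" "0 \<le> -2 * e"
      using assms[rule_format, of 1 1] assms[rule_format, of 1 "-1"] by auto
    then show ?thesis using \<open>d1 = 0\<close> by simp
  qed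
qed

lemma quadratic_form_2:
  fixes M :: "real^2^2"
  assumes "M$1$2 = M$2$1"
  shows "vector [a, b] \<bullet> (M *v vector [a, b]) = M$1$1 * a\<^sup>2 + 2 * M$1$2 * a * b + M$2$2 * b\<^sup>2"
  using assms
  by (simp add: inner_vec_def matrix_vector_mult_def sum_2 power2_eq_square algebra_simps)

lemma psd_gap_entries:
  fixes A B :: "real^2^2"
  assumes "A$1$2 = A$2$1" "B$1$2 = B$2$1"
    and "\<forall>h. h \<bullet> ((A - B) *v h) + 2 * \<delta> * (h \<bullet> h) \<le> 0"
  shows "0 \<le> B$1$1 - A$1$1 - 2 * \<delta>" "0 \<le> B$2$2 - A$2$2 - 2 * \<delta>"
    "(B$1$2 - A$1$2)\<^sup>2 \<le> (B$1$1 - A$1$1 - 2 * \<delta>) * (B$2$2 - A$2$2 - 2 * \<delta>)"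
proof -
  have "0 \<le> (B$1$1 - A$1$1 - 2 * \<delta>) * a\<^sup>2 + 2 * (B$1$2 - A$1$2) * a * b + (B$2$2 - A$2$2 - 2 * \<delta>) * b\<^sup>2"
    for a b
  proof -
    have "vector [a, b] \<bullet> (vector [a, b] :: real^2) = a\<^sup>2 + b\<^sup>2"
      by (simp add: inner_vec_def sum_2 power2_eq_square)
    then show ?thesis
      using assms(3)[rule_format, of "vector [a, b]"] assms(1,2)
      by (simp add: matrix_vector_mult_diff_rdistrib inner_diff_right quadratic_form_2 algebra_simps)
  qed
  then show "0 \<le> B$1$1 - A$1$1 - 2 * \<delta>" "0 \<le> B$2$2 - A$2$2 - 2 * \<delta>"
    "(B$1$2 - A$1$2)\<^sup>2 \<le> (B$1$1 - A$1$1 - 2 * \<delta>) * (B$2$2 - A$2$2 - 2 * \<delta>)"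
    using quadratic_form_nonneg_coeffs by blast+
qed

lemma pos_def2_entries:
  assumes "pos_def2 H"
  shows "H$1$1 > 0" "H$2$2 > 0" "det H > 0"
proof -
  have P: "0 < vector [a, b] \<bullet> (H *v vector [a, b])" if "a \<noteq> 0 \<or> b \<noteq> 0" for a b
  proof -
    have "vector [a, b] \<noteq> (0 :: real^2)" using that by (auto simp: vec_eq_iff forall_2)
    then show ?thesis using assms unfolding pos_def2_def by blast
  qed
  have form: "vector [a, b] \<bullet> (H *v vector [a, b])
      = H$1$1 * a\<^sup>2 + (H$1$2 + H$2$1) * a * b + H$2$2 * b\<^sup>2" for a b
    by (simp add: inner_vec_def matrix_vector_mult_def sum_2 power2_eq_square algebra_simps)
  show h11: "H$1$1 > 0" using P[of 1 0] by (simp add: form)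
  show "H$2$2 > 0" using P[of 0 1] by (simp add: form)
  define s where "s = H$1$2 + H$2$1"
  have "0 < H$1$1 * (4 * H$1$1 * H$2$2 - s\<^sup>2)"
    using P[of s "-2 * H$1$1"] h11 by (simp add: form s_def power2_eq_square algebra_simps)
  then have "s\<^sup>2 < 4 * H$1$1 * H$2$2" using h11 by (simp add: zero_less_mult_iff)
  moreover have "s\<^sup>2 - 4 * H$1$2 * H$2$1 = (H$1$2 - H$2$1)\<^sup>2"
    by (simp add: s_def power2_eq_square algebra_simps)
  ultimately show "det H > 0" unfolding det_2 using zero_le_power2[of "H$1$2 - H$2$1"] by linarith
qed

lemma E2_le_of_hessian_below:
  fixes A B :: "real^2^2"
  assumes sym: "A$1$2 = A$2$1" "B$1$2 = B$2$1"
    and lap: "lap2 A > 0" and \<delta>: "0 \<le> \<delta>"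
    and below: "\<forall>h. h \<bullet> ((A - B) *v h) + 2 * \<delta> * (h \<bullet> h) \<le> 0"
    and c: "0 \<le> c" "ut + c \<ge> 0"
  shows "E2 ut A \<le> c * lap2 B + max 0 (det B - \<delta> * lap2 B)"
proof -
  define d1 d2 e where "d1 = B$1$1 - A$1$1 - 2 * \<delta>" and "d2 = B$2$2 - A$2$2 - 2 * \<delta>"
    and "e = B$1$2 - A$1$2"
  have d: "0 \<le> d1" "0 \<le> d2" "e\<^sup>2 \<le> d1 * d2"
    using psd_gap_entries[OF sym below] by (simp_all add: d1_def d2_def e_def)
  have lapB: "lap2 B = lap2 A + 4 * \<delta> + d1 + d2" by (simp add: lap2_def d1_def d2_def)
  have "- ut * lap2 A \<le> c * lap2 A" using c lap by (intro mult_right_mono) auto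
  also have "\<dots> \<le> c * lap2 B" using c \<delta> d lapB by (intro mult_left_mono) auto
  finally have ut_part: "- ut * lap2 A \<le> c * lap2 B" .
  have "det A \<le> det B - \<delta> * lap2 B" if "det A > 0"
  proof -
    have "(A$1$2)\<^sup>2 < A$1$1 * A$2$2" using that sym by (simp add: det_2 power2_eq_square)
    then have "A$1$1 * A$2$2 > 0" using zero_le_power2[of "A$1$2"] by linarith
    then have pos: "A$1$1 > 0" "A$2$2 > 0" using lap by (auto simp: zero_less_mult_iff lap2_def)
    have "2 * A$1$2 * e \<le> A$1$1 * d2 + A$2$2 * d1"
      by (rule mixed_discriminant_nonneg) (use pos d \<open>(A$1$2)\<^sup>2 < _\<close> in auto)
    moreover have "det B - 2 * \<delta> * lap2 B + 4 * \<delta>\<^sup>2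
        = det A + (A$1$1 * d2 + A$2$2 * d1 - 2 * A$1$2 * e) + (d1 * d2 - e\<^sup>2)"
      using sym by (simp add: det_2 lap2_def d1_def d2_def e_def power2_eq_square algebra_simps)
    moreover have "4 * \<delta>\<^sup>2 \<le> \<delta> * lap2 B"
      using \<delta> pos d lapB mult_left_mono[of "4 * \<delta>" "lap2 B" \<delta>]
      by (simp add: power2_eq_square lap2_def)
    ultimately show ?thesis using d by linarith
  qed
  then have "det A \<le> max 0 (det B - \<delta> * lap2 B)" by fastforce
  with ut_part show ?thesis by (simp add: E2_def)
qed

lemma E2_ge_of_hessian_above:
  fixes A B :: "real^2^2"
  assumes sym: "A$1$2 = A$2$1" "B$1$2 = B$2$1" and pd: "pos_def2 B"
    and above: "\<forall>h. h \<bullet> ((B - A) *v h) + 2 * \<delta> * (h \<bullet> h) \<le> 0"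
    and c: "0 \<le> c" "c \<le> 2 * \<delta>" "ut \<le> c"
  shows "det B + 2 * \<delta> * lap2 B - c * (lap2 B + 4 * \<delta>) \<le> E2 ut A"
proof -
  define d1 d2 e where "d1 = A$1$1 - B$1$1 - 2 * \<delta>" and "d2 = A$2$2 - B$2$2 - 2 * \<delta>"
    and "e = A$1$2 - B$1$2"
  have d: "0 \<le> d1" "0 \<le> d2" "e\<^sup>2 \<le> d1 * d2"
    using psd_gap_entries[OF sym(2,1) above] by (simp_all add: d1_def d2_def e_def)
  have B: "B$1$1 > 0" "B$2$2 > 0" "(B$1$2)\<^sup>2 < B$1$1 * B$2$2"
    using pos_def2_entries[OF pd] sym by (simp_all add: det_2 power2_eq_square)
  have lapA: "lap2 A = lap2 B + 4 * \<delta> + d1 + d2" by (simp add: lap2_def d1_def d2_def)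
  have "ut * lap2 A \<le> c * lap2 A" using c B d lapA by (intro mult_right_mono) (auto simp: lap2_def)
  moreover have "2 * B$1$2 * e \<le> B$1$1 * d2 + B$2$2 * d1"
    by (rule mixed_discriminant_nonneg) (use B d in auto)
  moreover have "det A = det B + 2 * \<delta> * lap2 B + 4 * \<delta>\<^sup>2 + 2 * \<delta> * (d1 + d2)
      + (B$1$1 * d2 + B$2$2 * d1 - 2 * B$1$2 * e) + (d1 * d2 - e\<^sup>2)"
    using sym by (simp add: det_2 lap2_def d1_def d2_def e_def power2_eq_square algebra_simps)
  moreover have "c * (d1 + d2) \<le> 2 * \<delta> * (d1 + d2)" using c d by (intro mult_right_mono) auto
  moreover have "c * lap2 A = c * (lap2 B + 4 * \<delta>) + c * (d1 + d2)" using lapA by (simp add: algebra_simps)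
  moreover have "0 \<le> \<delta>\<^sup>2" by simp
  ultimately show ?thesis using d unfolding E2_def by linarith
qed

lemma DERIV_along_line:
  fixes f :: "'a::real_normed_vector \<Rightarrow> real"
  assumes "(f has_derivative f') (at (a + s *\<^sub>R h))"
  shows "((\<lambda>s. f (a + s *\<^sub>R h)) has_real_derivative f' h) (at s)"
proof -
  have line: "((\<lambda>s. a + s *\<^sub>R h) has_derivative (\<lambda>e. e *\<^sub>R h)) (at s)"
    by (auto intro!: derivative_eq_intros)
  have "((\<lambda>s. f (a + s *\<^sub>R h)) has_derivative (\<lambda>e. f' (e *\<^sub>R h))) (at s)"
    using has_derivative_compose[OF line assms] by simp
  moreover have "(\<lambda>e. f' (e *\<^sub>R h)) = (*) (f' h)"
    using linear_scale[OF has_derivative_linear[OF assms]] by auto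
  ultimately show ?thesis by (simp add: has_field_derivative_def)
qed

lemma DERIV_second_nonpos_at_local_max:
  fixes \<phi> \<psi> :: "real \<Rightarrow> real"
  assumes d: "d > 0"
    and d\<phi>: "\<And>s. \<bar>s\<bar> < d \<Longrightarrow> (\<phi> has_real_derivative \<psi> s) (at s)"
    and d\<psi>: "(\<psi> has_real_derivative l) (at 0)"
    and max: "\<And>s. \<bar>s\<bar> < d \<Longrightarrow> \<phi> s \<le> \<phi> 0"
  shows "l \<le> 0"
proof (rule ccontr)
  assume "\<not> l \<le> 0"
  have "\<psi> 0 = 0"
    by (rule DERIV_local_max[OF d\<phi>[of 0] d]) (use d max in \<open>auto simp: dist_real_def\<close>)
  with \<open>\<not> l \<le> 0\<close> obtain d' where d': "d' > 0" "\<And>e. 0 < e \<Longrightarrow> e < d' \<Longrightarrow> 0 < \<psi> e"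
    using DERIV_pos_inc_right[OF d\<psi>] by auto
  define e where "e = min d d' / 2"
  have e: "0 < e" "e < d" "e < d'" using d d' by (auto simp: e_def)
  obtain z where z: "0 < z" "z < e" "\<phi> e - \<phi> 0 = (e - 0) * \<psi> z"
    using MVT2[OF e(1), of \<phi> \<psi>] d\<phi> e by auto
  then have "\<phi> e > \<phi> 0" using d'(2)[of z] e by (simp add: algebra_simps)
  with max[of e] e show False by simp
qed

lemma second_derivative_nonpos_at_max:
  fixes f :: "'a::real_inner \<Rightarrow> real" and G :: "'a \<Rightarrow> 'a"
  assumes S: "open S" "x \<in> S" and max: "\<forall>y\<in>S. f y \<le> f x"
    and df: "\<forall>y\<in>S. (f has_derivative (\<lambda>k. G y \<bullet> k)) (at y)"
    and dG: "(G has_derivative L) (at x)"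
  shows "h \<bullet> L h \<le> 0"
proof -
  obtain r where r: "r > 0" "ball x r \<subseteq> S" using S open_contains_ball by blast
  define d where "d = r / (norm h + 1)"
  have d: "d > 0" using r by (simp add: d_def add_nonneg_pos)
  have line_in_S: "x + s *\<^sub>R h \<in> S" if "\<bar>s\<bar> < d" for s
  proof -
    have "norm (s *\<^sub>R h) \<le> \<bar>s\<bar> * (norm h + 1)" by (simp add: mult_left_mono)
    also have "\<dots> < d * (norm h + 1)" using that by (simp add: add_nonneg_pos)
    also have "\<dots> = r" using norm_ge_zero[of h] by (simp add: d_def del: norm_ge_zero)
    finally show ?thesis using r by (auto simp: dist_norm)
  qed
  show ?thesis
  proof (rule DERIV_second_nonpos_at_local_max[OF d])
    show "((\<lambda>s. f (x + s *\<^sub>R h)) has_real_derivative G (x + s *\<^sub>R h) \<bullet> h) (at s)" if "\<bar>s\<bar> < d" for s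
      using DERIV_along_line df line_in_S[OF that] by blast
    have "((\<lambda>y. G y \<bullet> h) has_derivative (\<lambda>k. L k \<bullet> h)) (at (x + 0 *\<^sub>R h))"
      using dG by (auto intro!: derivative_eq_intros)
    then show "((\<lambda>s. G (x + s *\<^sub>R h) \<bullet> h) has_real_derivative h \<bullet> L h) (at 0)"
      using DERIV_along_line by (fastforce simp: inner_commute)
    show "f (x + s *\<^sub>R h) \<le> f (x + 0 *\<^sub>R h)" if "\<bar>s\<bar> < d" for s
      using max line_in_S[OF that] S by simp
  qed
qed

lemma DERIV_nonneg_at_left_max:
  fixes \<phi> :: "real \<Rightarrow> real"
  assumes "T < t" "(\<phi> has_real_derivative l) (at t)" "\<forall>s\<in>{T..t}. \<phi> s \<le> \<phi> t"
  shows "l \<ge> 0"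
proof (rule ccontr)
  assume "\<not> l \<ge> 0"
  then obtain d where d: "d > 0" "\<forall>h>0. h < d \<longrightarrow> \<phi> t < \<phi> (t - h)"
    using DERIV_neg_dec_left[OF assms(2)] by auto
  define h where "h = min d (t - T) / 2"
  have "h > 0" "h < d" "h < t - T" using d assms(1) by (auto simp: h_def)
  then show False using d assms(3)[rule_format, of "t - h"] by auto
qed

lemma mixed_second_difference:
  fixes f :: "real^2 \<Rightarrow> real" and G :: "real^2 \<Rightarrow> real^2" and H :: "real^2 \<Rightarrow> real^2^2"
  assumes S: "ball x r \<subseteq> S"
    and df: "\<forall>y\<in>S. (f has_derivative (\<lambda>k. G y \<bullet> k)) (at y)"
    and dG: "\<forall>y\<in>S. (G has_derivative (\<lambda>k. H y *v k)) (at y)"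
    and hk: "norm h \<le> 1" "norm k \<le> 1" and s: "0 < s" "2 * s < r"
  shows "\<exists>y. dist y x < 2 * s \<and>
    f (x + s *\<^sub>R h + s *\<^sub>R k) - f (x + s *\<^sub>R h) - f (x + s *\<^sub>R k) + f x = s\<^sup>2 * ((H y *v k) \<bullet> h)"
proof -
  have small: "norm (a *\<^sub>R h + b *\<^sub>R k) \<le> a + b" if "0 \<le> a" "0 \<le> b" for a b
    using norm_triangle_ineq[of "a *\<^sub>R h" "b *\<^sub>R k"] that hk
      mult_left_le[of "norm h" a] mult_left_le[of "norm k" b] by simp
  have in_S: "x + a *\<^sub>R h + b *\<^sub>R k \<in> S" if "0 \<le> a" "a \<le> s" "0 \<le> b" "b \<le> s" for a b
  proof -
    have "dist x (x + a *\<^sub>R h + b *\<^sub>R k) = norm (a *\<^sub>R h + b *\<^sub>R k)"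
      by (metis add.assoc add_diff_cancel_left' dist_commute dist_norm)
    then have "dist x (x + a *\<^sub>R h + b *\<^sub>R k) < r" using small[of a b] that s by simp
    then show ?thesis using S by auto
  qed
  define g where "g \<sigma> = f ((x + s *\<^sub>R k) + \<sigma> *\<^sub>R h) - f (x + \<sigma> *\<^sub>R h)" for \<sigma>
  have dg: "(g has_real_derivative (G (x + s *\<^sub>R k + \<sigma> *\<^sub>R h) - G (x + \<sigma> *\<^sub>R h)) \<bullet> h) (at \<sigma>)"
    if "0 \<le> \<sigma>" "\<sigma> \<le> s" for \<sigma>
  proof -
    have "x + s *\<^sub>R k + \<sigma> *\<^sub>R h \<in> S" "x + \<sigma> *\<^sub>R h \<in> S"
      using in_S[of \<sigma> s] in_S[of \<sigma> 0] that s by (simp_all add: algebra_simps)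
    then show ?thesis
      unfolding g_def inner_diff_left using df by (intro DERIV_diff DERIV_along_line) auto
  qed
  obtain \<xi> where \<xi>: "0 < \<xi>" "\<xi> < s"
    "g s - g 0 = (s - 0) * ((G (x + s *\<^sub>R k + \<xi> *\<^sub>R h) - G (x + \<xi> *\<^sub>R h)) \<bullet> h)"
    using MVT2[OF s(1) dg] by auto
  define \<psi> where "\<psi> \<rho> = G ((x + \<xi> *\<^sub>R h) + \<rho> *\<^sub>R k) \<bullet> h" for \<rho>
  have d\<psi>: "(\<psi> has_real_derivative (H (x + \<xi> *\<^sub>R h + \<rho> *\<^sub>R k) *v k) \<bullet> h) (at \<rho>)"
    if "0 \<le> \<rho>" "\<rho> \<le> s" for \<rho>
  proof -
    have "((\<lambda>y. G y \<bullet> h) has_derivative (\<lambda>k'. (H (x + \<xi> *\<^sub>R h + \<rho> *\<^sub>R k) *v k') \<bullet> h))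
        (at (x + \<xi> *\<^sub>R h + \<rho> *\<^sub>R k))"
      using dG in_S[of \<xi> \<rho>] that \<xi> by (auto intro!: derivative_eq_intros)
    then show ?thesis unfolding \<psi>_def using DERIV_along_line by fastforce
  qed
  obtain \<eta> where \<eta>: "0 < \<eta>" "\<eta> < s"
    "\<psi> s - \<psi> 0 = (s - 0) * ((H (x + \<xi> *\<^sub>R h + \<eta> *\<^sub>R k) *v k) \<bullet> h)"
    using MVT2[OF s(1) d\<psi>] by auto
  define y where "y = x + \<xi> *\<^sub>R h + \<eta> *\<^sub>R k"
  have "dist y x < 2 * s"
    using small[of \<xi> \<eta>] \<xi> \<eta> by (simp add: y_def dist_norm)
  moreover have "f (x + s *\<^sub>R h + s *\<^sub>R k) - f (x + s *\<^sub>R h) - f (x + s *\<^sub>R k) + f x = g s - g 0"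
    by (simp add: g_def algebra_simps)
  moreover have "g s - g 0 = s * (\<psi> s - \<psi> 0)"
    using \<xi>(3) by (simp add: \<psi>_def inner_diff_left algebra_simps)
  ultimately show ?thesis using \<eta>(3) by (auto simp: y_def power2_eq_square)
qed

lemma hessian_symmetric:
  fixes f :: "real^2 \<Rightarrow> real" and G :: "real^2 \<Rightarrow> real^2" and H :: "real^2 \<Rightarrow> real^2^2"
  assumes S: "open S" "x \<in> S"
    and df: "\<forall>y\<in>S. (f has_derivative (\<lambda>k. G y \<bullet> k)) (at y)"
    and dG: "\<forall>y\<in>S. (G has_derivative (\<lambda>k. H y *v k)) (at y)"
    and cH: "continuous_on S H"
  shows "H x $1$2 = H x $2$1"
proof (rule ccontr)
  assume "H x $1$2 \<noteq> H x $2$1"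
  define c where "c = \<bar>H x $1$2 - H x $2$1\<bar> / 2"
  have "c > 0" using \<open>H x $1$2 \<noteq> H x $2$1\<close> by (simp add: c_def)
  moreover have "isCont H x" using cH S continuous_on_eq_continuous_at by blast
  ultimately obtain d where d: "d > 0" "\<And>y. dist y x < d \<Longrightarrow> dist (H y) (H x) < c"
    unfolding continuous_at_eps_delta by blast
  have entry_close: "\<bar>H y $i$j - H x $i$j\<bar> < c" if "dist y x < d" for y i j
  proof -
    have "\<bar>(H y - H x) $i$j\<bar> \<le> norm ((H y - H x) $ i)" by (rule component_le_norm_cart)
    also have "\<dots> \<le> norm (H y - H x)" by (rule Finite_Cartesian_Product.norm_nth_le)
    finally show ?thesis using d(2)[OF that] by (simp add: dist_norm)
  qed
  obtain r where r: "r > 0" "ball x r \<subseteq> S" using S open_contains_ball by blast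
  define s where "s = min r d / 4"
  have s: "0 < s" "2 * s < r" "2 * s < d" using r d by (auto simp: s_def)
  define h k :: "real^2" where "h = axis 1 1" and "k = axis 2 1"
  have hk: "norm h \<le> 1" "norm k \<le> 1" by (simp_all add: h_def k_def)
  obtain y1 where y1: "dist y1 x < 2 * s"
    "f (x + s *\<^sub>R h + s *\<^sub>R k) - f (x + s *\<^sub>R h) - f (x + s *\<^sub>R k) + f x = s\<^sup>2 * ((H y1 *v k) \<bullet> h)"
    using mixed_second_difference[OF r(2) df dG hk s(1,2)] by blast
  obtain y2 where y2: "dist y2 x < 2 * s"
    "f (x + s *\<^sub>R k + s *\<^sub>R h) - f (x + s *\<^sub>R k) - f (x + s *\<^sub>R h) + f x = s\<^sup>2 * ((H y2 *v h) \<bullet> k)"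
    using mixed_second_difference[OF r(2) df dG hk(2,1) s(1,2)] by blast
  have "s\<^sup>2 * ((H y1 *v k) \<bullet> h) = s\<^sup>2 * ((H y2 *v h) \<bullet> k)"
    using y1(2) y2(2) by (simp add: algebra_simps)
  then have "H y1 $1$2 = H y2 $2$1"
    using s(1) by (simp add: h_def k_def inner_vec_def matrix_vector_mult_def sum_2 axis_def)
  moreover have "\<bar>H y1 $1$2 - H x $1$2\<bar> < c" "\<bar>H y2 $2$1 - H x $2$1\<bar> < c"
    using entry_close y1(1) y2(1) s by auto
  ultimately show False unfolding c_def by (simp add: abs_if split: if_splits)
qed

lemma C21_with_diff:
  assumes "C21_with \<Omega> u Du Hu Ut" and "C21_with \<Omega> w Dw Hw Wt"
  shows "C21_with \<Omega> (\<lambda>x t. u x t - w x t) (\<lambda>x t. Du x t - Dw x t) (\<lambda>x t. Hu x t - Hw x t)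
    (\<lambda>x t. Ut x t - Wt x t)"
proof -
  have "((\<lambda>y. u y t - w y t) has_derivative (\<lambda>h. (Du x t - Dw x t) \<bullet> h)) (at x)
      \<and> ((\<lambda>y. Du y t - Dw y t) has_derivative (\<lambda>h. (Hu x t - Hw x t) *v h)) (at x)
      \<and> ((\<lambda>s. u x s - w x s) has_real_derivative Ut x t - Wt x t) (at t within {0..})"
    if "x \<in> \<Omega>" "t \<ge> 0" for x t
    using assms that unfolding C21_with_def inner_diff_left matrix_vector_mult_diff_rdistrib
    by (auto intro!: has_derivative_diff DERIV_diff)
  then show ?thesis
    using assms unfolding C21_with_def case_prod_beta' by (auto intro!: continuous_on_diff)
qed

lemma C21_with_time_independent:
  assumes "C2_with \<Omega> v Dv Hv"
  shows "C21_with \<Omega> (\<lambda>x t. v x) (\<lambda>x t. Dv x) (\<lambda>x t. Hv x) (\<lambda>x t. 0)"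
  using assms unfolding C21_with_def C2_with_def case_prod_beta'
  by (auto intro!: continuous_on_compose2[OF _ continuous_on_fst])

lemma C21_with_sub_time_independent:
  assumes "C21_with \<Omega> u Du Hu Ut" "C2_with \<Omega> v Dv Hv"
  shows "C21_with \<Omega> (\<lambda>x t. u x t - v x) (\<lambda>x t. Du x t - Dv x) (\<lambda>x t. Hu x t - Hv x) Ut"
  using C21_with_diff[OF assms(1) C21_with_time_independent[OF assms(2)]] by simp

lemma C21_with_time_independent_sub:
  assumes "C21_with \<Omega> u Du Hu Ut" "C2_with \<Omega> v Dv Hv"
  shows "C21_with \<Omega> (\<lambda>x t. v x - u x t) (\<lambda>x t. Dv x - Du x t) (\<lambda>x t. Hv x - Hu x t)
    (\<lambda>x t. - Ut x t)"
  using C21_with_diff[OF C21_with_time_independent[OF assms(2)] assms(1)] by simp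

lemma C21_with_hessian_symmetric:
  assumes "open \<Omega>" "C21_with \<Omega> u Du Hu Ut" "x \<in> \<Omega>" "t \<ge> 0"
  shows "Hu x t $1$2 = Hu x t $2$1"
proof (rule hessian_symmetric[OF assms(1,3)])
  show "\<forall>y\<in>\<Omega>. ((\<lambda>y. u y t) has_derivative (\<lambda>h. Du y t \<bullet> h)) (at y)"
    "\<forall>y\<in>\<Omega>. ((\<lambda>y. Du y t) has_derivative (\<lambda>h. Hu y t *v h)) (at y)"
    using assms(2,4) by (auto simp: C21_with_def)
  have "continuous_on (closure \<Omega> \<times> {0..}) (\<lambda>(x, t). Hu x t)"
    using assms(2) by (simp add: C21_with_def)
  then have "continuous_on \<Omega> (\<lambda>y. (\<lambda>(x, t). Hu x t) (y, t))"
    by (rule continuous_on_compose2) (use assms(4) closure_subset in \<open>auto intro!: continuous_intros\<close>)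
  then show "continuous_on \<Omega> (\<lambda>y. Hu y t)" by simp
qed

lemma lap2_nonzero_of_E2_pos:
  assumes "E2 ut H > 0" "H$1$2 = H$2$1"
  shows "lap2 H \<noteq> 0"
proof
  assume "lap2 H = 0"
  then have "det H = - (H$1$1)\<^sup>2 - (H$1$2)\<^sup>2"
    using assms(2) by (simp add: lap2_def det_2 power2_eq_square eq_neg_iff_add_eq_0[symmetric])
  then have "det H \<le> 0" by (simp add: add_nonneg_nonneg)
  with assms(1) \<open>lap2 H = 0\<close> show False by (simp add: E2_def)
qed

lemma lap2_pos_of_E2_pos:
  assumes op: "open \<Omega>" and cn: "connected \<Omega>" and C: "C21_with \<Omega> u Du Hu Ut"
    and E: "\<forall>x\<in>\<Omega>. \<forall>t\<ge>0. E2 (Ut x t) (Hu x t) > 0"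
    and x0: "x0 \<in> \<Omega>" "lap2 (Hu x0 0) > 0"
    and xt: "x \<in> \<Omega>" "t \<ge> 0"
  shows "lap2 (Hu x t) > 0"
proof (rule ccontr)
  define P where "P = \<Omega> \<times> {0::real..}"
  define F where "F p = lap2 (Hu (fst p) (snd p))" for p
  have "continuous_on (closure \<Omega> \<times> {0..}) (\<lambda>p. Hu (fst p) (snd p))"
    using C by (simp add: C21_with_def case_prod_beta')
  then have "continuous_on P (\<lambda>p. Hu (fst p) (snd p))"
    by (rule continuous_on_subset) (use closure_subset in \<open>auto simp: P_def\<close>)
  then have "continuous_on P F" unfolding F_def lap2_def by (intro continuous_intros)
  moreover have "connected P" unfolding P_def using cn by (intro connected_Times) auto
  ultimately have "connected (F ` P)" by (rule connected_continuous_image)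
  moreover assume "\<not> lap2 (Hu x t) > 0"
  moreover have "(x, t) \<in> P" "(x0, 0) \<in> P" using xt x0 by (auto simp: P_def)
  ultimately have "0 \<in> F ` P"
    using connectedD_interval[of "F ` P" "F (x, t)" "F (x0, 0)" 0] x0 by (force simp: F_def)
  then obtain y s where "y \<in> \<Omega>" "s \<ge> 0" "lap2 (Hu y s) = 0" by (auto simp: P_def F_def)
  with lap2_nonzero_of_E2_pos E C21_with_hessian_symmetric[OF op C] show False by blast
qed

lemma pos_def2_uniform_bounds:
  assumes "compact K" "K \<noteq> {}" "continuous_on K H" "\<forall>x\<in>K. pos_def2 (H x)"
  obtains \<tau> \<Theta> \<mu> where "0 < \<tau>" "\<tau> \<le> \<Theta>" "0 < \<mu>"
    "\<forall>x\<in>K. \<tau> \<le> lap2 (H x) \<and> lap2 (H x) \<le> \<Theta> \<and> \<mu> \<le> det (H x)"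
proof -
  have lap: "continuous_on K (\<lambda>x. lap2 (H x))" and det: "continuous_on K (\<lambda>x. det (H x))"
    unfolding lap2_def det_2 using assms(3) by (auto intro!: continuous_intros)
  obtain x1 where x1: "x1 \<in> K" "\<forall>y\<in>K. lap2 (H x1) \<le> lap2 (H y)"
    using continuous_attains_inf[OF assms(1,2) lap] by blast
  obtain x2 where x2: "x2 \<in> K" "\<forall>y\<in>K. lap2 (H y) \<le> lap2 (H x2)"
    using continuous_attains_sup[OF assms(1,2) lap] by blast
  obtain x3 where x3: "x3 \<in> K" "\<forall>y\<in>K. det (H x3) \<le> det (H y)"
    using continuous_attains_inf[OF assms(1,2) det] by blast
  have "lap2 (H x1) > 0" "det (H x3) > 0"
    using pos_def2_entries[of "H x1"] pos_def2_entries[of "H x3"] assms(4) x1 x3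
    by (auto simp: lap2_def)
  with x1 x2 x3 show ?thesis by (intro that[of "lap2 (H x1)" "lap2 (H x2)" "det (H x3)"]) auto
qed

lemma parabolic_comparison:
  fixes z :: "real^2 \<Rightarrow> real \<Rightarrow> real" and \<Omega> :: "(real^2) set"
  assumes op: "open \<Omega>" and bdd: "bounded \<Omega>"
    and cont: "continuous_on (closure \<Omega> \<times> {T..}) (\<lambda>p. z (fst p) (snd p))"
    and bdry: "\<forall>x\<in>frontier \<Omega>. \<forall>t\<ge>T. z x t \<le> 0"
    and init: "\<forall>x\<in>closure \<Omega>. z x T \<le> 0"
    and no_max: "\<And>x t. x \<in> \<Omega> \<Longrightarrow> t > T \<Longrightarrow> z x t > 0 \<Longrightarrow> \<forall>y\<in>\<Omega>. z y t \<le> z x t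
        \<Longrightarrow> \<forall>s\<in>{T..t}. z x s \<le> z x t \<Longrightarrow> False"
    and x1: "x1 \<in> closure \<Omega>" and t1: "t1 \<ge> T"
  shows "z x1 t1 \<le> 0"
proof (rule ccontr)
  assume pos: "\<not> z x1 t1 \<le> 0"
  define K where "K = closure \<Omega> \<times> {T..t1}"
  have "compact K" unfolding K_def using bdd by (intro compact_Times) (auto simp: compact_closure)
  moreover have "(x1, t1) \<in> K" using x1 t1 by (auto simp: K_def)
  moreover have "continuous_on K (\<lambda>p. z (fst p) (snd p))"
    by (rule continuous_on_subset[OF cont]) (auto simp: K_def)
  ultimately obtain x t where xt: "(x, t) \<in> K" and max: "\<forall>p\<in>K. z (fst p) (snd p) \<le> z x t"
    using continuous_attains_sup[of K "\<lambda>p. z (fst p) (snd p)"] by fastforce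
  have "z x t > 0" using max \<open>(x1, t1) \<in> K\<close> pos by force
  have x: "x \<in> closure \<Omega>" and t: "T \<le> t" "t \<le> t1" using xt by (auto simp: K_def)
  have "x \<notin> frontier \<Omega>" using bdry \<open>z x t > 0\<close> t by force
  then have "x \<in> \<Omega>" using x op by (simp add: frontier_def interior_open)
  have "t \<noteq> T" using init x \<open>z x t > 0\<close> by force
  show False
  proof (rule no_max[OF \<open>x \<in> \<Omega>\<close> _ \<open>z x t > 0\<close>])
    show "t > T" using t \<open>t \<noteq> T\<close> by simp
    show "\<forall>y\<in>\<Omega>. z y t \<le> z x t" using max t closure_subset by (force simp: K_def)
    show "\<forall>s\<in>{T..t}. z x s \<le> z x t" using max t x by (force simp: K_def)
  qed
qed

lemma hessian_bound_at_max:
  fixes w :: "real^2 \<Rightarrow> real \<Rightarrow> real"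
  assumes op: "open \<Omega>" and C: "C21_with \<Omega> w Dw Hw Wt" and x: "x \<in> \<Omega>" and "t \<ge> 0"
    and max: "\<forall>y\<in>\<Omega>. w y t + \<delta> * (y \<bullet> y) \<le> w x t + \<delta> * (x \<bullet> x)"
  shows "h \<bullet> (Hw x t *v h) + 2 * \<delta> * (h \<bullet> h) \<le> 0"
proof -
  define G where "G y = Dw y t + (2 * \<delta>) *\<^sub>R y" for y
  have "h \<bullet> (Hw x t *v h + (2 * \<delta>) *\<^sub>R h) \<le> 0"
  proof (rule second_derivative_nonpos_at_max[OF op x max])
    show "\<forall>y\<in>\<Omega>. ((\<lambda>y. w y t + \<delta> * (y \<bullet> y)) has_derivative (\<lambda>k. G y \<bullet> k)) (at y)"
    proof
      fix y assume "y \<in> \<Omega>"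
      then have "((\<lambda>y. w y t) has_derivative (\<lambda>k. Dw y t \<bullet> k)) (at y)"
        using C \<open>t \<ge> 0\<close> by (simp add: C21_with_def)
      then have "((\<lambda>y. w y t + \<delta> * (y \<bullet> y))
          has_derivative (\<lambda>k. Dw y t \<bullet> k + \<delta> * (y \<bullet> k + k \<bullet> y))) (at y)"
        by (intro derivative_intros) auto
      moreover have "(\<lambda>k. Dw y t \<bullet> k + \<delta> * (y \<bullet> k + k \<bullet> y)) = (\<lambda>k. G y \<bullet> k)"
        by (auto simp: fun_eq_iff G_def inner_add_left inner_commute algebra_simps)
      ultimately show "((\<lambda>y. w y t + \<delta> * (y \<bullet> y)) has_derivative (\<lambda>k. G y \<bullet> k)) (at y)"
        by simp
    qed
    show "(G has_derivative (\<lambda>h. Hw x t *v h + (2 * \<delta>) *\<^sub>R h)) (at x)"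
      using C x \<open>t \<ge> 0\<close> unfolding C21_with_def G_def by (auto intro!: derivative_eq_intros)
  qed
  then show ?thesis by (simp add: inner_add_right)
qed

lemma time_derivative_bound_at_max:
  fixes w :: "real^2 \<Rightarrow> real \<Rightarrow> real"
  assumes C: "C21_with \<Omega> w Dw Hw Wt" and x: "x \<in> \<Omega>" and "0 \<le> T" "T < t"
    and dg: "(g has_real_derivative g') (at t)"
    and max: "\<forall>s\<in>{T..t}. w x s - g s \<le> w x t - g t"
  shows "g' \<le> Wt x t"
proof -
  have "((\<lambda>s. w x s) has_real_derivative Wt x t) (at t within {0..})"
    using C x assms(3,4) by (simp add: C21_with_def)
  moreover have "at t within {0..} = at t" using assms(3,4) by (intro at_within_interior) simp
  ultimately have "((\<lambda>s. w x s - g s) has_real_derivative Wt x t - g') (at t)"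
    using dg by (auto intro: DERIV_diff)
  then show ?thesis using DERIV_nonneg_at_left_max[OF \<open>T < t\<close> _ max] by fastforce
qed

lemma barrier_comparison:
  fixes w :: "real^2 \<Rightarrow> real \<Rightarrow> real" and \<Omega> :: "(real^2) set"
  assumes op: "open \<Omega>" and bdd: "bounded \<Omega>" and C: "C21_with \<Omega> w Dw Hw Wt"
    and pos: "0 \<le> T" "0 < \<delta>" "0 < c" "0 < M"
    and \<rho>: "\<forall>x\<in>closure \<Omega>. x \<bullet> x \<le> \<rho>"
    and bdry: "\<forall>x\<in>frontier \<Omega>. \<forall>t\<ge>T. w x t \<le> a"
    and init: "\<forall>x\<in>closure \<Omega>. w x T \<le> a + M"
    and decay: "\<forall>x\<in>\<Omega>. \<forall>t\<ge>T.
      (\<forall>h. h \<bullet> (Hw x t *v h) + 2 * \<delta> * (h \<bullet> h) \<le> 0) \<longrightarrow> Wt x t + c < 0"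
    and x: "x \<in> closure \<Omega>" and t: "t \<ge> T"
  shows "w x t \<le> a + \<delta> * (\<rho> - x \<bullet> x) + M * exp (- (c / M) * (t - T))"
proof -
  define g where "g t = M * exp (- (c / M) * (t - T))" for t
  define z where "z x t = w x t - a - \<delta> * (\<rho> - x \<bullet> x) - g t" for x t
  have barrier_nonneg: "0 \<le> \<delta> * (\<rho> - x \<bullet> x)" if "x \<in> closure \<Omega>" for x
    using \<rho> that pos by simp
  have "z x t \<le> 0"
  proof (rule parabolic_comparison[OF op bdd _ _ _ _ x t])
    have "continuous_on (closure \<Omega> \<times> {0..}) (\<lambda>p. w (fst p) (snd p))"
      using C by (simp add: C21_with_def case_prod_beta')
    then have "continuous_on (closure \<Omega> \<times> {T..}) (\<lambda>p. w (fst p) (snd p))"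
      by (rule continuous_on_subset) (use pos in auto)
    then show "continuous_on (closure \<Omega> \<times> {T..}) (\<lambda>p. z (fst p) (snd p))"
      unfolding z_def g_def by (intro continuous_intros)
    show "\<forall>x\<in>frontier \<Omega>. \<forall>t\<ge>T. z x t \<le> 0"
    proof (intro ballI allI impI)
      fix x t assume "x \<in> frontier \<Omega>" "T \<le> t"
      then have "w x t \<le> a" "0 \<le> \<delta> * (\<rho> - x \<bullet> x)"
        using bdry barrier_nonneg by (auto simp: frontier_def)
      moreover have "0 < g t" using pos by (simp add: g_def)
      ultimately show "z x t \<le> 0" by (simp add: z_def)
    qed
    show "\<forall>x\<in>closure \<Omega>. z x T \<le> 0"
      using init barrier_nonneg by (fastforce simp: z_def g_def)
  next
    fix x t assume x: "x \<in> \<Omega>" and "t > T" and max_x: "\<forall>y\<in>\<Omega>. z y t \<le> z x t"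
      and max_t: "\<forall>s\<in>{T..t}. z x s \<le> z x t"
    have "\<forall>y\<in>\<Omega>. w y t + \<delta> * (y \<bullet> y) \<le> w x t + \<delta> * (x \<bullet> x)"
      using max_x by (simp add: z_def right_diff_distrib)
    then have "\<forall>h. h \<bullet> (Hw x t *v h) + 2 * \<delta> * (h \<bullet> h) \<le> 0"
      using hessian_bound_at_max[OF op C x] \<open>t > T\<close> pos by auto
    with decay x \<open>t > T\<close> have "Wt x t + c < 0" by auto
    have "(g has_real_derivative - (c / M) * g t) (at t)"
      unfolding g_def by (auto intro!: derivative_eq_intros)
    moreover have "\<forall>s\<in>{T..t}. w x s - g s \<le> w x t - g t"
      using max_t by (simp add: z_def)
    ultimately have "- (c / M) * g t \<le> Wt x t"
      using time_derivative_bound_at_max[OF C x pos(1) \<open>t > T\<close>] by blast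
    moreover have "(c / M) * g t \<le> c"
      using pos \<open>t > T\<close> by (simp add: g_def)
    ultimately show False using \<open>Wt x t + c < 0\<close> by linarith
  qed
  then show ?thesis by (simp add: z_def g_def)
qed

lemma maximum_principle_with_barrier:
  fixes w :: "real^2 \<Rightarrow> real \<Rightarrow> real" and \<Omega> :: "(real^2) set"
  assumes op: "open \<Omega>" and bdd: "bounded \<Omega>" and C: "C21_with \<Omega> w Dw Hw Wt"
    and bdry: "\<forall>e>0. \<forall>\<^sub>F t in at_top. \<forall>x\<in>frontier \<Omega>. w x t < e"
    and decay: "\<forall>\<delta>>0. \<exists>c>0. \<forall>\<^sub>F t in at_top. \<forall>x\<in>\<Omega>.
      (\<forall>h. h \<bullet> (Hw x t *v h) + 2 * \<delta> * (h \<bullet> h) \<le> 0) \<longrightarrow> Wt x t + c < 0"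
    and e: "e > 0"
  shows "\<forall>\<^sub>F t in at_top. \<forall>x\<in>closure \<Omega>. w x t < e"
proof (cases "\<Omega> = {}")
  case False
  obtain B where B: "\<forall>x\<in>closure \<Omega>. norm x \<le> B"
    using bdd bounded_closure bounded_iff by blast
  define \<rho> where "\<rho> = B\<^sup>2"
  have \<rho>: "\<forall>x\<in>closure \<Omega>. x \<bullet> x \<le> \<rho>"
    using B by (auto simp: \<rho>_def power2_norm_eq_inner[symmetric] intro!: power_mono)
  have "\<rho> \<ge> 0" by (simp add: \<rho>_def)
  define \<delta> where "\<delta> = e / (3 * (\<rho> + 1))"
  have \<delta>: "\<delta> > 0" "\<delta> * \<rho> \<le> e / 3"
    using e \<open>\<rho> \<ge> 0\<close> by (auto simp: \<delta>_def field_simps)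
  obtain c T1 where c: "c > 0" and T1: "\<forall>t\<ge>T1. \<forall>x\<in>\<Omega>.
      (\<forall>h. h \<bullet> (Hw x t *v h) + 2 * \<delta> * (h \<bullet> h) \<le> 0) \<longrightarrow> Wt x t + c < 0"
    using decay \<delta> by (auto simp: eventually_at_top_linorder)
  obtain T2 where T2: "\<forall>t\<ge>T2. \<forall>x\<in>frontier \<Omega>. w x t < e / 3"
    using bdry[rule_format, of "e / 3"] e by (auto simp: eventually_at_top_linorder)
  define T where "T = max 0 (max T1 T2)"
  have "continuous_on (closure \<Omega> \<times> {0..}) (\<lambda>(x, t). w x t)" using C by (simp add: C21_with_def)
  then have "continuous_on (closure \<Omega>) (\<lambda>x. (\<lambda>(x, t). w x t) (x, T))"
    by (rule continuous_on_compose2) (auto simp: T_def intro!: continuous_intros)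
  then obtain xm where xm: "\<forall>x\<in>closure \<Omega>. w x T \<le> w xm T"
    using continuous_attains_sup[of "closure \<Omega>" "\<lambda>x. w x T"] bdd False by auto
  define M where "M = \<bar>w xm T\<bar> + 1"
  have M: "M > 0" "\<forall>x\<in>closure \<Omega>. w x T \<le> e / 3 + M"
    using xm e by (auto simp: M_def)
  have bound: "w x t \<le> e / 3 + \<delta> * (\<rho> - x \<bullet> x) + M * exp (- (c / M) * (t - T))"
    if "x \<in> closure \<Omega>" "t \<ge> T" for x t
    by (rule barrier_comparison[OF op bdd C _ \<delta>(1) c M(1) \<rho> _ M(2) _ that])
      (use T1 T2 in \<open>auto simp: T_def less_imp_le\<close>)
  have "((\<lambda>t. M * exp (- (c / M) * (t - T))) \<longlongrightarrow> 0) at_top"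
    using c M(1) by real_asymp
  then have "\<forall>\<^sub>F t in at_top. M * exp (- (c / M) * (t - T)) < e / 3"
    using e by (intro order_tendstoD) auto
  then show ?thesis using eventually_ge_at_top[of T]
  proof eventually_elim
    case (elim t)
    show ?case
    proof
      fix x assume x: "x \<in> closure \<Omega>"
      have "\<delta> * (\<rho> - x \<bullet> x) \<le> \<delta> * \<rho>" using \<delta> by (simp add: mult_left_mono)
      with elim bound[OF x, of t] \<delta> show "w x t < e" by linarith
    qed
  qed
qed simp

lemma decay_where_hessian_below:
  fixes Hu :: "real^2 \<Rightarrow> real \<Rightarrow> real^2^2" and Hv :: "real^2 \<Rightarrow> real^2^2"
  assumes sym: "\<forall>x\<in>S. \<forall>t\<ge>0. Hu x t $1$2 = Hu x t $2$1" "\<forall>x\<in>S. Hv x $1$2 = Hv x $2$1"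
    and lap: "\<forall>x\<in>S. \<forall>t\<ge>0. lap2 (Hu x t) > 0"
    and bounds: "0 < \<tau>" "\<tau> \<le> \<Theta>" "0 < \<mu>"
      "\<forall>x\<in>S. \<tau> \<le> lap2 (Hv x) \<and> lap2 (Hv x) \<le> \<Theta> \<and> \<mu> \<le> det (Hv x)"
    and conv: "\<forall>\<eta>>0. \<forall>\<^sub>F t in at_top. \<forall>x\<in>S. \<bar>E2 (Ut x t) (Hu x t) - det (Hv x)\<bar> < \<eta>"
    and \<delta>: "\<delta> > 0"
  shows "\<exists>c>0. \<forall>\<^sub>F t in at_top. \<forall>x\<in>S.
    (\<forall>h. h \<bullet> ((Hu x t - Hv x) *v h) + 2 * \<delta> * (h \<bullet> h) \<le> 0) \<longrightarrow> Ut x t + c < 0"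
proof (intro exI conjI)
  define \<eta> where "\<eta> = min (\<delta> * \<tau>) \<mu> / 3"
  have \<eta>: "\<eta> > 0" "3 * \<eta> \<le> \<delta> * \<tau>" "3 * \<eta> \<le> \<mu>" using \<delta> bounds by (auto simp: \<eta>_def)
  show "\<eta> / \<Theta> > 0" using \<eta> bounds by simp
  show "\<forall>\<^sub>F t in at_top. \<forall>x\<in>S.
      (\<forall>h. h \<bullet> ((Hu x t - Hv x) *v h) + 2 * \<delta> * (h \<bullet> h) \<le> 0) \<longrightarrow> Ut x t + \<eta> / \<Theta> < 0"
    using conv[rule_format, OF \<eta>(1)] eventually_ge_at_top[of 0]
  proof eventually_elim
    case (elim t)
    show ?case
    proof (intro ballI impI)
      fix x assume x: "x \<in> S" and below: "\<forall>h. h \<bullet> ((Hu x t - Hv x) *v h) + 2 * \<delta> * (h \<bullet> h) \<le> 0"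
      show "Ut x t + \<eta> / \<Theta> < 0"
      proof (rule ccontr)
        assume "\<not> Ut x t + \<eta> / \<Theta> < 0"
        then have "E2 (Ut x t) (Hu x t) \<le> \<eta> / \<Theta> * lap2 (Hv x) + max 0 (det (Hv x) - \<delta> * lap2 (Hv x))"
          by (intro E2_le_of_hessian_below below) (use sym lap x elim \<delta> \<eta> bounds in auto)
        moreover have "\<eta> / \<Theta> * lap2 (Hv x) \<le> \<eta>"
          using x bounds \<eta> by (simp add: divide_le_eq mult.commute mult_left_mono)
        moreover have "\<delta> * \<tau> \<le> \<delta> * lap2 (Hv x)" "\<mu> \<le> det (Hv x)" using x bounds \<delta> by simp_all
        moreover have "\<bar>E2 (Ut x t) (Hu x t) - det (Hv x)\<bar> < \<eta>" using elim x by blast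
        ultimately show False using \<eta> unfolding max_def abs_less_iff by (auto split: if_splits)
      qed
    qed
  qed
qed

lemma decay_where_hessian_above:
  fixes Hu :: "real^2 \<Rightarrow> real \<Rightarrow> real^2^2" and Hv :: "real^2 \<Rightarrow> real^2^2"
  assumes sym: "\<forall>x\<in>S. \<forall>t\<ge>0. Hu x t $1$2 = Hu x t $2$1" "\<forall>x\<in>S. Hv x $1$2 = Hv x $2$1"
    and pd: "\<forall>x\<in>S. pos_def2 (Hv x)"
    and bounds: "0 < \<tau>" "\<tau> \<le> \<Theta>" "\<forall>x\<in>S. \<tau> \<le> lap2 (Hv x) \<and> lap2 (Hv x) \<le> \<Theta>"
    and conv: "\<forall>\<eta>>0. \<forall>\<^sub>F t in at_top. \<forall>x\<in>S. \<bar>E2 (Ut x t) (Hu x t) - det (Hv x)\<bar> < \<eta>"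
    and \<delta>: "\<delta> > 0"
  shows "\<exists>c>0. \<forall>\<^sub>F t in at_top. \<forall>x\<in>S.
    (\<forall>h. h \<bullet> ((Hv x - Hu x t) *v h) + 2 * \<delta> * (h \<bullet> h) \<le> 0) \<longrightarrow> - Ut x t + c < 0"
proof (intro exI conjI)
  define \<eta> where "\<eta> = \<delta> * \<tau> / 3"
  define c where "c = min (2 * \<delta>) (\<eta> / (\<Theta> + 4 * \<delta>))"
  have \<eta>: "\<eta> > 0" using \<delta> bounds by (simp add: \<eta>_def)
  have "\<Theta> + 4 * \<delta> > 0" using \<delta> bounds by simp
  then have c: "0 < c" "c \<le> 2 * \<delta>" "c * (\<Theta> + 4 * \<delta>) \<le> \<eta>"
    using \<eta> \<delta> pos_le_divide_eq[of "\<Theta> + 4 * \<delta>" c \<eta>] by (auto simp: c_def)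
  show "c > 0" by (fact c(1))
  show "\<forall>\<^sub>F t in at_top. \<forall>x\<in>S.
      (\<forall>h. h \<bullet> ((Hv x - Hu x t) *v h) + 2 * \<delta> * (h \<bullet> h) \<le> 0) \<longrightarrow> - Ut x t + c < 0"
    using conv[rule_format, OF \<eta>] eventually_ge_at_top[of 0]
  proof eventually_elim
    case (elim t)
    show ?case
    proof (intro ballI impI)
      fix x assume x: "x \<in> S" and above: "\<forall>h. h \<bullet> ((Hv x - Hu x t) *v h) + 2 * \<delta> * (h \<bullet> h) \<le> 0"
      show "- Ut x t + c < 0"
      proof (rule ccontr)
        assume "\<not> - Ut x t + c < 0"
        then have "det (Hv x) + 2 * \<delta> * lap2 (Hv x) - c * (lap2 (Hv x) + 4 * \<delta>) \<le> E2 (Ut x t) (Hu x t)"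
          by (intro E2_ge_of_hessian_above above) (use sym pd x elim c in auto)
        moreover have "c * (lap2 (Hv x) + 4 * \<delta>) \<le> c * (\<Theta> + 4 * \<delta>)"
          using x bounds c by (intro mult_left_mono) auto
        moreover have "\<delta> * \<tau> \<le> \<delta> * lap2 (Hv x)" using x bounds \<delta> by simp
        moreover have "\<bar>E2 (Ut x t) (Hu x t) - det (Hv x)\<bar> < \<eta>" using elim x by blast
        moreover have "3 * \<eta> = \<delta> * \<tau>" by (simp add: \<eta>_def)
        ultimately show False using c(3) by linarith
      qed
    qed
  qed
qed

theorem theorem1p1:
  fixes \<Omega> :: "(real^2) set"
    and u :: "real^2 \<Rightarrow> real \<Rightarrow> real" and Du :: "real^2 \<Rightarrow> real \<Rightarrow> real^2"
    and Hu :: "real^2 \<Rightarrow> real \<Rightarrow> real^2^2" and Ut :: "real^2 \<Rightarrow> real \<Rightarrow> real"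
    and v :: "real^2 \<Rightarrow> real" and Dv :: "real^2 \<Rightarrow> real^2" and Hv :: "real^2 \<Rightarrow> real^2^2"
    and x0 :: "real^2"
  assumes "open \<Omega>" and "connected \<Omega>" and "bounded \<Omega>" and "\<Omega> \<noteq> {}"
    and "C21_with \<Omega> u Du Hu Ut"
    and "\<forall>x\<in>closure \<Omega>. \<forall>t\<ge>0. E2 (Ut x t) (Hu x t) > 0"
    and "C2_with \<Omega> v Dv Hv"
    and "\<forall>x\<in>closure \<Omega>. pos_def2 (Hv x)"
    and "x0 \<in> \<Omega>" and "lap2 (Hu x0 0) > 0"
    and "\<forall>e>0. \<forall>\<^sub>F t in at_top. \<forall>x\<in>frontier \<Omega>. \<bar>u x t - v x\<bar> < e"
    and "\<forall>e>0. \<forall>\<^sub>F t in at_top. \<forall>x\<in>closure \<Omega>. \<bar>E2 (Ut x t) (Hu x t) - det (Hv x)\<bar> < e"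
  shows "\<forall>e>0. \<forall>\<^sub>F t in at_top. \<forall>x\<in>closure \<Omega>. \<bar>u x t - v x\<bar> < e"
proof -
  note op = assms(1) and C = assms(5) and V = C21_with_time_independent[OF assms(7)]
  have symU: "\<forall>x\<in>\<Omega>. \<forall>t\<ge>0. Hu x t $1$2 = Hu x t $2$1"
    and symV: "\<forall>x\<in>\<Omega>. Hv x $1$2 = Hv x $2$1"
    using C21_with_hessian_symmetric[OF op C] C21_with_hessian_symmetric[OF op V, of _ 0] by auto
  have lapU: "\<forall>x\<in>\<Omega>. \<forall>t\<ge>0. lap2 (Hu x t) > 0"
    using lap2_pos_of_E2_pos[OF op assms(2) C _ assms(9,10)] assms(6) closure_subset by blast
  obtain \<tau> \<Theta> \<mu> where bounds: "0 < \<tau>" "\<tau> \<le> \<Theta>" "0 < \<mu>"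
      "\<forall>x\<in>closure \<Omega>. \<tau> \<le> lap2 (Hv x) \<and> lap2 (Hv x) \<le> \<Theta> \<and> \<mu> \<le> det (Hv x)"
    using pos_def2_uniform_bounds[of "closure \<Omega>" Hv] assms(3,4,7,8)
    by (auto simp: C2_with_def compact_closure)
  have conv: "\<forall>\<eta>>0. \<forall>\<^sub>F t in at_top. \<forall>x\<in>\<Omega>. \<bar>E2 (Ut x t) (Hu x t) - det (Hv x)\<bar> < \<eta>"
    using assms(12) closure_subset by (fast elim: eventually_mono)
  have boundsV: "\<forall>x\<in>\<Omega>. \<tau> \<le> lap2 (Hv x) \<and> lap2 (Hv x) \<le> \<Theta> \<and> \<mu> \<le> det (Hv x)"
    using bounds(4) closure_subset by blast
  have "\<forall>e>0. \<forall>\<^sub>F t in at_top. \<forall>x\<in>frontier \<Omega>. u x t - v x < e"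
    "\<forall>e>0. \<forall>\<^sub>F t in at_top. \<forall>x\<in>frontier \<Omega>. v x - u x t < e"
    using assms(11) by (auto elim!: eventually_mono simp: abs_less_iff)
  moreover have "\<forall>\<delta>>0. \<exists>c>0. \<forall>\<^sub>F t in at_top. \<forall>x\<in>\<Omega>.
      (\<forall>h. h \<bullet> ((Hu x t - Hv x) *v h) + 2 * \<delta> * (h \<bullet> h) \<le> 0) \<longrightarrow> Ut x t + c < 0"
    using decay_where_hessian_below[OF symU symV lapU bounds(1-3) boundsV conv] by blast
  moreover have "\<forall>\<delta>>0. \<exists>c>0. \<forall>\<^sub>F t in at_top. \<forall>x\<in>\<Omega>.
      (\<forall>h. h \<bullet> ((Hv x - Hu x t) *v h) + 2 * \<delta> * (h \<bullet> h) \<le> 0) \<longrightarrow> - Ut x t + c < 0"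
    using decay_where_hessian_above[OF symU symV _ bounds(1,2) _ conv] assms(8) boundsV closure_subset
    by blast
  ultimately have above: "\<forall>\<^sub>F t in at_top. \<forall>x\<in>closure \<Omega>. u x t - v x < e"
    and below: "\<forall>\<^sub>F t in at_top. \<forall>x\<in>closure \<Omega>. v x - u x t < e" if "e > 0" for e
    using maximum_principle_with_barrier[OF op assms(3) C21_with_sub_time_independent[OF C assms(7)]]
      maximum_principle_with_barrier[OF op assms(3) C21_with_time_independent_sub[OF C assms(7)]]
      that by blast+
  show ?thesis
  proof (intro allI impI)
    fix e :: real assume "e > 0"
    from above[OF this] below[OF this]
    show "\<forall>\<^sub>F t in at_top. \<forall>x\<in>closure \<Omega>. \<bar>u x t - v x\<bar> < e"
      by eventually_elim (auto simp: abs_less_iff)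
  qed
qed

end
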